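(* Let $M(E,I)$ be a free partially commutative monoid and $\alpha\in M(E,I)$. Then the comma category $\mathfrak FM(E,I)/\alpha$ is a partially ordered set, i.e. between any two objects there is at most one morphism, and two objects with morphisms in both directions are equal.
   Context: $M(E,I)$ is the monoid generated by a set $E$ (possibly infinite) with relations $ab=ba$ for $(a,b)\in I$, $I\subseteq E\times E$ irreflexive and symmetric. For a monoid $M$, $\mathfrak FM$ has objects the elements of $M$ and morphisms $\beta\to\gamma$ the pairs $(f,g)$ with $g\beta f=\gamma$; composition $(f_2,g_2)\circ(f_1,g_1)=(f_1f_2,g_2g_1)$. The comma category $\mathfrak FM/\alpha$ has objects pairs $(\beta,\varphi)$ with $\varphi:\beta\to\alpha$ a morphism of $\mathfrak FM$, and morphisms $(\beta,\varphi)\to(\beta',\varphi')$ the morphisms $\psi:\beta\to\beta'$ with $\varphi'\circ\psi=\varphi$. *)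

theory Defs
  imports "HOL-Algebra.Group"
begin

definition trace_step :: "('a \<times> 'a) set \<Rightarrow> ('a list \<times> 'a list) set" where
  "trace_step I = {(u @ [a, b] @ v, u @ [b, a] @ v) | u a b v. (a, b) \<in> I}"

definition trace_eq :: "('a \<times> 'a) set \<Rightarrow> ('a list \<times> 'a list) set" where
  "trace_eq I = (trace_step I \<union> (trace_step I)\<inverse>)\<^sup>*"

definition trace_class :: "('a \<times> 'a) set \<Rightarrow> 'a list \<Rightarrow> 'a list set" where
  "trace_class I w = {v. (w, v) \<in> trace_eq I}"

definition trace_mult :: "('a \<times> 'a) set \<Rightarrow> 'a list set \<Rightarrow> 'a list set \<Rightarrow> 'a list set" where
  "trace_mult I A B = {w. \<exists>u\<in>A. \<exists>v\<in>B. (u @ v, w) \<in> trace_eq I}"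

definition trace_monoid :: "'a set \<Rightarrow> ('a \<times> 'a) set \<Rightarrow> 'a list set monoid" where
  "trace_monoid E I =
     \<lparr> carrier = {trace_class I w | w. w \<in> lists E},
       mult = trace_mult I,
       one = trace_class I [] \<rparr>"

definition fm_hom :: "('m, 'b) monoid_scheme \<Rightarrow> 'm \<Rightarrow> 'm \<Rightarrow> 'm \<times> 'm \<Rightarrow> bool" where
  "fm_hom M \<beta> \<gamma> \<phi> \<longleftrightarrow> fst \<phi> \<in> carrier M \<and> snd \<phi> \<in> carrier M \<and>
      snd \<phi> \<otimes>\<^bsub>M\<^esub> \<beta> \<otimes>\<^bsub>M\<^esub> fst \<phi> = \<gamma>"

definition fm_comp :: "('m, 'b) monoid_scheme \<Rightarrow> 'm \<times> 'm \<Rightarrow> 'm \<times> 'm \<Rightarrow> 'm \<times> 'm" where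
  "fm_comp M \<phi>2 \<phi>1 = (fst \<phi>1 \<otimes>\<^bsub>M\<^esub> fst \<phi>2, snd \<phi>2 \<otimes>\<^bsub>M\<^esub> snd \<phi>1)"

definition comma_obj :: "('m, 'b) monoid_scheme \<Rightarrow> 'm \<Rightarrow> 'm \<times> ('m \<times> 'm) \<Rightarrow> bool" where
  "comma_obj M \<alpha> X \<longleftrightarrow> fst X \<in> carrier M \<and> fm_hom M (fst X) \<alpha> (snd X)"

definition comma_hom :: "('m, 'b) monoid_scheme \<Rightarrow> 'm \<Rightarrow> 'm \<times> ('m \<times> 'm) \<Rightarrow> 'm \<times> ('m \<times> 'm)
    \<Rightarrow> 'm \<times> 'm \<Rightarrow> bool" where
  "comma_hom M \<alpha> X Y \<psi> \<longleftrightarrow> fm_hom M (fst X) (fst Y) \<psi> \<and> fm_comp M (snd Y) \<psi> = snd X"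

end

theory Submission
  imports Defs "HOL-Algebra.Divisibility"
begin

text \<open>Deleting the first occurrence of a letter and reversing a word both respect the commutation
  congruence; together with the length invariant this makes M(E,I) a cancellative monoid whose only
  unit is the empty trace. In any such monoid the comma category FM/alpha is a poset: a morphism
  (f,g) from (beta,(f1,g1)) to (beta',(f2,g2)) satisfies f f2 = f1 and g2 g = g1, so it is determined
  by cancellation, and morphisms in both directions give f f' f1 = f1 and g1 g' g = g1, which force
  all four components to be 1.\<close>

lemma (in monoid_cancel) mult_eq_one_commute:
  assumes "a \<otimes> b = \<one>" "a \<in> carrier G" "b \<in> carrier G"
  shows "b \<otimes> a = \<one>"
proof -
  have "a \<otimes> (b \<otimes> a) = a \<otimes> \<one>"
    using assms by (simp flip: m_assoc)
  then show ?thesis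
    using assms by (blast intro: l_cancel)
qed

lemma (in monoid_cancel) mult_eq_oneD:
  assumes "Units G = {\<one>}" "a \<otimes> b = \<one>" "a \<in> carrier G" "b \<in> carrier G"
  shows "a = \<one>" "b = \<one>"
proof -
  have "a \<in> Units G" "b \<in> Units G"
    using assms mult_eq_one_commute unfolding Units_def by blast+
  then show "a = \<one>" "b = \<one>"
    using assms(1) by auto
qed

lemma (in monoid_cancel) comma_hom_unique:
  assumes "comma_obj G \<alpha> Y" "comma_hom G \<alpha> X Y \<psi>" "comma_hom G \<alpha> X Y \<psi>'"
  shows "\<psi> = \<psi>'"
proof -
  obtain f g where \<phi>: "snd Y = (f, g)" by fastforce
  obtain p q p' q' where \<psi>: "\<psi> = (p, q)" and \<psi>': "\<psi>' = (p', q')" by fastforce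
  have carrier: "f \<in> carrier G" "g \<in> carrier G" "p \<in> carrier G" "q \<in> carrier G"
    "p' \<in> carrier G" "q' \<in> carrier G"
    using assms \<phi> \<psi> \<psi>' by (auto simp: comma_obj_def comma_hom_def fm_hom_def)
  have "(p \<otimes> f, g \<otimes> q) = (p' \<otimes> f, g \<otimes> q')"
    using assms(2,3) \<phi> \<psi> \<psi>' by (simp add: comma_hom_def fm_comp_def)
  then have "p = p'" "q = q'"
    using carrier by (auto intro: l_cancel r_cancel)
  then show ?thesis
    using \<psi> \<psi>' by simp
qed

lemma (in monoid_cancel) comma_hom_antisym:
  assumes "Units G = {\<one>}" "comma_obj G \<alpha> X" "comma_obj G \<alpha> Y"
    and "comma_hom G \<alpha> X Y \<psi>" "comma_hom G \<alpha> Y X \<psi>'"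
  shows "X = Y"
proof -
  obtain b f g b' f' g' where X: "X = (b, f, g)" and Y: "Y = (b', f', g')"
    by (metis prod.collapse)
  obtain p q p' q' where \<psi>: "\<psi> = (p, q)" and \<psi>': "\<psi>' = (p', q')" by fastforce
  have carrier: "b \<in> carrier G" "f \<in> carrier G" "g \<in> carrier G" "f' \<in> carrier G" "g' \<in> carrier G"
    "p \<in> carrier G" "q \<in> carrier G" "p' \<in> carrier G" "q' \<in> carrier G"
    using assms X Y \<psi> \<psi>' by (auto simp: comma_obj_def comma_hom_def fm_hom_def)
  have eqs: "q \<otimes> b \<otimes> p = b'" "p \<otimes> f' = f" "g' \<otimes> q = g" "p' \<otimes> f = f'" "g \<otimes> q' = g'"
    using assms(4,5) X Y \<psi> \<psi>' by (auto simp: comma_hom_def fm_comp_def fm_hom_def)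
  have "(p \<otimes> p') \<otimes> f = \<one> \<otimes> f"
    using carrier eqs by (simp add: m_assoc)
  then have "p = \<one>"
    using carrier assms(1) by (metis mult_eq_oneD(1) m_closed one_closed r_cancel)
  have "g \<otimes> (q' \<otimes> q) = g \<otimes> \<one>"
    using carrier eqs by (simp flip: m_assoc)
  then have "q = \<one>"
    using carrier assms(1) by (metis mult_eq_oneD(2) m_closed one_closed l_cancel)
  show ?thesis
    using X Y eqs carrier \<open>p = \<one>\<close> \<open>q = \<one>\<close> by simp
qed

lemma equiv_trace_eq: "equiv UNIV (trace_eq I)"
  unfolding trace_eq_def
  by (intro equivI refl_rtrancl sym_rtrancl trans_rtrancl) (auto simp: sym_Un_converse)

lemma trace_eq_refl: "(x, x) \<in> trace_eq I"
  by (simp add: trace_eq_def)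

lemma trace_eq_sym: "(x, y) \<in> trace_eq I \<Longrightarrow> (y, x) \<in> trace_eq I"
  using equiv_trace_eq by (blast elim: equivE dest: symD)

lemma trace_eq_trans: "(x, y) \<in> trace_eq I \<Longrightarrow> (y, z) \<in> trace_eq I \<Longrightarrow> (x, z) \<in> trace_eq I"
  using equiv_trace_eq by (blast elim: equivE dest: transD)

lemma trace_step_into_trace_eq: "(x, y) \<in> trace_step I \<Longrightarrow> (x, y) \<in> trace_eq I"
  by (simp add: trace_eq_def r_into_rtrancl)

lemma trace_eq_map:
  assumes "(x, y) \<in> trace_eq I"
    and "\<And>u v. (u, v) \<in> trace_step I \<Longrightarrow> (h u, h v) \<in> trace_eq I"
  shows "(h x, h y) \<in> trace_eq I"
  using assms(1) unfolding trace_eq_def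
proof (induction rule: rtrancl_induct)
  case base
  show ?case by simp
next
  case (step y z)
  then have "(h y, h z) \<in> trace_eq I"
    using assms(2) trace_eq_sym by blast
  with step.IH show ?case
    by (metis trace_eq_def trace_eq_trans)
qed

lemma trace_eq_length: "(x, y) \<in> trace_eq I \<Longrightarrow> length x = length y"
  unfolding trace_eq_def by (induction rule: rtrancl_induct) (auto simp: trace_step_def)

lemma trace_step_append_context: "(x, y) \<in> trace_step I \<Longrightarrow> (w @ x @ z, w @ y @ z) \<in> trace_step I"
  unfolding trace_step_def by clarsimp (metis append.assoc append_Cons)

lemma trace_eq_append_context: "(x, y) \<in> trace_eq I \<Longrightarrow> (w @ x @ z, w @ y @ z) \<in> trace_eq I"
  by (erule trace_eq_map) (simp add: trace_step_append_context trace_step_into_trace_eq)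

lemma trace_eq_append:
  assumes "(x, x') \<in> trace_eq I" "(y, y') \<in> trace_eq I"
  shows "(x @ y, x' @ y') \<in> trace_eq I"
  using trace_eq_append_context[OF assms(1), of "[]" y] trace_eq_append_context[OF assms(2), of x' "[]"]
  by (simp add: trace_eq_trans)

text \<open>Reversal turns a swap of a b into a swap of b a, i.e. a step of the converse relation, so no
  symmetry of I is needed.\<close>
lemma trace_step_rev: "(x, y) \<in> trace_step I \<Longrightarrow> (rev y, rev x) \<in> trace_step I"
  unfolding trace_step_def by clarsimp (metis append.assoc append_Cons append_Nil)

lemma trace_eq_rev: "(x, y) \<in> trace_eq I \<Longrightarrow> (rev x, rev y) \<in> trace_eq I"
  by (erule trace_eq_map) (simp add: trace_step_rev trace_step_into_trace_eq trace_eq_sym)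

lemma remove1_trace_step:
  assumes "(x, y) \<in> trace_step I"
  shows "(remove1 a x, remove1 a y) \<in> trace_eq I"
proof -
  obtain u b c v where x: "x = u @ [b, c] @ v" and y: "y = u @ [c, b] @ v" and "(b, c) \<in> I"
    using assms unfolding trace_step_def by blast
  show ?thesis
  proof (cases "a \<notin> set u \<and> (a = b \<or> a = c)")
    case True
    then have "remove1 a x = remove1 a y"
      using x y by (auto simp: remove1_append)
    then show ?thesis
      by (simp add: trace_eq_refl)
  next
    case False
    then have "(remove1 a x, remove1 a y) \<in> trace_step I"
      using x y \<open>(b, c) \<in> I\<close> unfolding trace_step_def by (auto simp: remove1_append)
    then show ?thesis
      by (rule trace_step_into_trace_eq)
  qed
qed

lemma trace_eq_cancel_left: "(w @ u, w @ v) \<in> trace_eq I \<Longrightarrow> (u, v) \<in> trace_eq I"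
proof (induction w)
  case Nil
  then show ?case by simp
next
  case (Cons a w)
  have "(remove1 a (a # w @ u), remove1 a (a # w @ v)) \<in> trace_eq I"
    by (rule trace_eq_map[OF Cons.prems[simplified] remove1_trace_step])
  with Cons.IH show ?case
    by simp
qed

lemma trace_eq_cancel_right: "(u @ w, v @ w) \<in> trace_eq I \<Longrightarrow> (u, v) \<in> trace_eq I"
  using trace_eq_rev[of "u @ w" "v @ w" I] trace_eq_cancel_left[of "rev w" "rev u" "rev v" I]
    trace_eq_rev[of "rev u" "rev v" I]
  by simp

lemma trace_class_eq_iff: "trace_class I u = trace_class I v \<longleftrightarrow> (u, v) \<in> trace_eq I"
  using equiv_class_eq_iff[OF equiv_trace_eq, where x = u and y = v]
  by (simp add: trace_class_def Image_singleton)

lemma trace_mult_class: "trace_mult I (trace_class I u) (trace_class I v) = trace_class I (u @ v)"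
  unfolding trace_mult_def trace_class_def
  by (blast intro: trace_eq_refl trace_eq_trans trace_eq_append)

lemma carrier_trace_monoid: "carrier (trace_monoid E I) = trace_class I ` lists E"
  by (auto simp: trace_monoid_def)

lemma one_trace_monoid: "\<one>\<^bsub>trace_monoid E I\<^esub> = trace_class I []"
  by (simp add: trace_monoid_def)

lemma mult_trace_monoid_class:
  "trace_class I u \<otimes>\<^bsub>trace_monoid E I\<^esub> trace_class I v = trace_class I (u @ v)"
  by (simp add: trace_monoid_def trace_mult_class)

lemma monoid_trace_monoid: "monoid (trace_monoid E I)"
  by (rule monoidI)
    (auto simp: carrier_trace_monoid one_trace_monoid mult_trace_monoid_class intro!: imageI)

lemma monoid_cancel_trace_monoid: "monoid_cancel (trace_monoid E I)"
proof (rule monoid.monoid_cancelI[OF monoid_trace_monoid])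
  fix a b c
  assume "c \<otimes>\<^bsub>trace_monoid E I\<^esub> a = c \<otimes>\<^bsub>trace_monoid E I\<^esub> b"
    and "a \<in> carrier (trace_monoid E I)" "b \<in> carrier (trace_monoid E I)"
    "c \<in> carrier (trace_monoid E I)"
  then show "a = b"
    by (clarsimp simp: carrier_trace_monoid mult_trace_monoid_class trace_class_eq_iff)
      (rule trace_eq_cancel_left)
next
  fix a b c
  assume "a \<otimes>\<^bsub>trace_monoid E I\<^esub> c = b \<otimes>\<^bsub>trace_monoid E I\<^esub> c"
    and "a \<in> carrier (trace_monoid E I)" "b \<in> carrier (trace_monoid E I)"
    "c \<in> carrier (trace_monoid E I)"
  then show "a = b"
    by (clarsimp simp: carrier_trace_monoid mult_trace_monoid_class trace_class_eq_iff)
      (rule trace_eq_cancel_right)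
qed

text \<open>A unit x y = 1 has |x| + |y| = 0, since the congruence preserves length.\<close>
lemma Units_trace_monoid: "Units (trace_monoid E I) = {\<one>\<^bsub>trace_monoid E I\<^esub>}"
proof -
  have "x = \<one>\<^bsub>trace_monoid E I\<^esub>" if "x \<in> Units (trace_monoid E I)" for x
    using that unfolding Units_def
    by (clarsimp simp: carrier_trace_monoid one_trace_monoid mult_trace_monoid_class
        trace_class_eq_iff)
      (metis append_is_Nil_conv length_0_conv trace_eq_length)
  then show ?thesis
    using monoid.Units_one_closed[OF monoid_trace_monoid] by blast
qed

theorem mainTheorem13:
  fixes E :: "'a set" and I :: "('a \<times> 'a) set" and \<alpha> :: "'a list set"
  assumes "I \<subseteq> E \<times> E" and "irrefl I" and "sym I"
    and "\<alpha> \<in> carrier (trace_monoid E I)"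
  shows "(\<forall>X Y \<psi> \<psi>'. comma_obj (trace_monoid E I) \<alpha> X \<and> comma_obj (trace_monoid E I) \<alpha> Y \<and>
            comma_hom (trace_monoid E I) \<alpha> X Y \<psi> \<and> comma_hom (trace_monoid E I) \<alpha> X Y \<psi>'
            \<longrightarrow> \<psi> = \<psi>') \<and>
         (\<forall>X Y \<psi> \<psi>'. comma_obj (trace_monoid E I) \<alpha> X \<and> comma_obj (trace_monoid E I) \<alpha> Y \<and>
            comma_hom (trace_monoid E I) \<alpha> X Y \<psi> \<and> comma_hom (trace_monoid E I) \<alpha> Y X \<psi>'
            \<longrightarrow> X = Y)"
  using monoid_cancel.comma_hom_unique[OF monoid_cancel_trace_monoid]
    monoid_cancel.comma_hom_antisym[OF monoid_cancel_trace_monoid Units_trace_monoid]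
  by blast

end
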